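(* Let $T$ be a noncrossing tree with vertex set $[n]$, with signature $s(T)=(s_1,\dots,s_n)$, and let $\overline{ik}\in T$ with $i<k$. Then $s_j\ge s_i$ for all $i<j<k$. Moreover, if $i<j<k$ and the path from $j$ to $k$ in $T$ does not contain $i$, then $s_j\ge s_i+1$.
   Context: A graph on $[n]$ is noncrossing if it has no two edges $\overline{ac},\overline{bd}$ with $a<b<c<d$. The signature of a noncrossing tree $T$ on $[n]$ is the sequence $s(T)=(s_1,\dots,s_n)$ defined by $s_1=1$ and, for $i>1$: $s_i=s_j$ where $j<i$ is the minimum vertex with $\overline{ji}\in T$, if such $j$ exists; otherwise $s_i=s_{i-1}+1$. *)

theory Defs
  imports Main
begin

definition graph_on :: "nat \<Rightarrow> nat set set \<Rightarrow> bool" where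
  "graph_on n E \<longleftrightarrow> (\<forall>e\<in>E. \<exists>a b. e = {a, b} \<and> a \<noteq> b \<and> a \<in> {1..n} \<and> b \<in> {1..n})"

definition is_walk :: "nat set set \<Rightarrow> nat list \<Rightarrow> bool" where
  "is_walk E p \<longleftrightarrow> p \<noteq> [] \<and> (\<forall>t < length p - 1. {p ! t, p ! Suc t} \<in> E)"

definition is_path :: "nat set set \<Rightarrow> nat list \<Rightarrow> nat \<Rightarrow> nat \<Rightarrow> bool" where
  "is_path E p u v \<longleftrightarrow> is_walk E p \<and> distinct p \<and> hd p = u \<and> last p = v"

definition has_cycle :: "nat set set \<Rightarrow> bool" where
  "has_cycle E \<longleftrightarrow> (\<exists>p. is_walk E p \<and> distinct p \<and> length p \<ge> 3 \<and> {last p, hd p} \<in> E)"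

definition connected_on :: "nat \<Rightarrow> nat set set \<Rightarrow> bool" where
  "connected_on n E \<longleftrightarrow> (\<forall>u\<in>{1..n}. \<forall>v\<in>{1..n}. \<exists>p. is_path E p u v)"

definition is_tree :: "nat \<Rightarrow> nat set set \<Rightarrow> bool" where
  "is_tree n E \<longleftrightarrow> graph_on n E \<and> connected_on n E \<and> \<not> has_cycle E"

definition noncrossing :: "nat set set \<Rightarrow> bool" where
  "noncrossing E \<longleftrightarrow> \<not> (\<exists>a b c d. a < b \<and> b < c \<and> c < d \<and> {a, c} \<in> E \<and> {b, d} \<in> E)"

function signature :: "nat set set \<Rightarrow> nat \<Rightarrow> nat" where
  "signature E i =
     (if i \<le> 1 then 1
      else if (\<exists>j<i. {j, i} \<in> E)
           then signature E (LEAST j. {j, i} \<in> E)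
           else signature E (i - 1) + 1)"
  by pat_completeness auto
termination
proof (relation "measure snd")
  fix E :: "nat set set" and i :: nat
  assume "\<not> i \<le> 1" "\<exists>j<i. {j, i} \<in> E"
  then obtain j where "j < i" "{j, i} \<in> E" by blast
  then have "(LEAST j. {j, i} \<in> E) \<le> j" by (rule_tac Least_le) 
  with \<open>j < i\<close> show "((E, LEAST j. {j, i} \<in> E), E, i) \<in> measure snd" by simp
qed auto

end

theory Submission
  imports Defs
begin

text \<open>Induction on j with i < j < k: s j is copied either from the least left neighbour l
  of j, which satisfies i \<le> l < j because the tree is noncrossing, or from j - 1 with an
  increment. Hence s i \<le> s j, and if equality holds then the chain of least left neighbours
  leads from j down to i, giving a path from i to j inside [i..j]. That path, a path from j
  to k avoiding i, and the edge ik would close a cycle.\<close>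

declare signature.simps[simp del]

lemma is_walk_append:
  assumes "is_walk E a" "is_walk E b" "{last a, hd b} \<in> E"
  shows "is_walk E (a @ b)"
  unfolding is_walk_def
proof (intro conjI allI impI)
  show "a @ b \<noteq> []" using assms(1) by (simp add: is_walk_def)
next
  fix t assume t: "t < length (a @ b) - 1"
  have a: "a \<noteq> []" "\<forall>t < length a - 1. {a ! t, a ! Suc t} \<in> E"
    using assms(1) by (auto simp: is_walk_def)
  have b: "b \<noteq> []" "\<forall>t < length b - 1. {b ! t, b ! Suc t} \<in> E"
    using assms(2) by (auto simp: is_walk_def)
  consider "Suc t < length a" | "Suc t = length a" | "t \<ge> length a" by linarith
  then show "{(a @ b) ! t, (a @ b) ! Suc t} \<in> E"
  proof cases
    case 1 then show ?thesis using a by (simp add: nth_append)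
  next
    case 2
    then have "t = length a - 1" by simp
    then have "a ! t = last a" using a by (simp add: last_conv_nth)
    moreover have "b ! 0 = hd b" using b by (simp add: hd_conv_nth)
    ultimately show ?thesis using 2 assms(3) by (simp add: nth_append)
  next
    case 3
    then have "{b ! (t - length a), b ! Suc (t - length a)} \<in> E" using b t by simp
    moreover have "Suc t - length a = Suc (t - length a)" using 3 by simp
    ultimately show ?thesis using 3 by (simp add: nth_append)
  qed
qed

lemma is_walk_take: "is_walk E p \<Longrightarrow> 0 < m \<Longrightarrow> is_walk E (take m p)"
  unfolding is_walk_def by auto

lemma is_walk_drop: "is_walk E p \<Longrightarrow> m < length p \<Longrightarrow> is_walk E (drop m p)"
  unfolding is_walk_def by auto

lemma is_path_snoc:
  assumes "is_path E q u v" "{v, w} \<in> E" "w \<notin> set q"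
  shows "is_path E (q @ [w]) u w"
proof -
  have "is_walk E (q @ [w])"
    using is_walk_append[of E q "[w]"] assms by (simp add: is_path_def is_walk_def)
  then show ?thesis using assms by (auto simp: is_path_def is_walk_def)
qed

lemma list_last_exit:
  assumes "hd p \<in> A" "last p \<notin> A" "p \<noteq> []"
  obtains t where "Suc t < length p" "p ! t \<in> A" "set (drop (Suc t) p) \<inter> A = {}"
proof -
  define T where "T = {t. t < length p \<and> p ! t \<in> A}"
  have "0 \<in> T" using assms by (simp add: T_def hd_conv_nth)
  moreover have "finite T" by (simp add: T_def)
  ultimately have t: "Max T \<in> T" and t_max: "\<And>u. u \<in> T \<Longrightarrow> u \<le> Max T"
    using Max_in by auto
  have "Max T \<noteq> length p - 1"
    using t assms(2,3) by (auto simp: T_def last_conv_nth)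
  moreover have "Max T < length p" using t by (simp add: T_def)
  ultimately have "Suc (Max T) < length p" by linarith
  moreover have "set (drop (Suc (Max T)) p) \<inter> A = {}"
  proof (rule ccontr)
    assume "\<not> ?thesis"
    then obtain u where "u < length p - Suc (Max T)" "p ! (Suc (Max T) + u) \<in> A"
      by (auto simp: in_set_conv_nth)
    then have "Suc (Max T) + u \<in> T" by (simp add: T_def)
    then show False using t_max by fastforce
  qed
  ultimately show thesis using that t by (simp add: T_def)
qed

text \<open>The cycle runs along q from i to the last vertex of p lying on q, then along the
  rest of p to k, and back to i.\<close>

lemma has_cycle_if_paths_and_edge:
  assumes q: "is_path E q i j" and p: "is_path E p j k"
    and "i \<notin> set p" "k \<notin> set q" "{i, k} \<in> E"
  shows "has_cycle E"
proof -
  have qw: "is_walk E q" "distinct q" "hd q = i" "last q = j" "q \<noteq> []"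
    and pw: "is_walk E p" "distinct p" "hd p = j" "last p = k" "p \<noteq> []"
    using q p by (auto simp: is_path_def is_walk_def)
  obtain t where t: "Suc t < length p" "p ! t \<in> set q"
    and disj: "set (drop (Suc t) p) \<inter> set q = {}"
    using list_last_exit[of p "set q"] pw qw \<open>k \<notin> set q\<close> by (metis last_in_set)
  obtain r where r: "r < length q" "q ! r = p ! t" using t by (meson in_set_conv_nth)
  have "r \<noteq> 0"
    using r t qw \<open>i \<notin> set p\<close> by (metis hd_conv_nth nth_mem Suc_lessD)
  define C where "C = take (Suc r) q @ drop (Suc t) p"
  have "last (take (Suc r) q) = p ! t" using r by (simp add: take_Suc_conv_app_nth)
  moreover have "hd (drop (Suc t) p) = p ! Suc t" using t by (simp add: hd_drop_conv_nth)
  moreover have "{p ! t, p ! Suc t} \<in> E" using pw(1) t by (auto simp: is_walk_def)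
  ultimately have "is_walk E C"
    unfolding C_def using is_walk_append[OF is_walk_take[OF qw(1)] is_walk_drop[OF pw(1) t(1)]]
    by simp
  moreover have "distinct C"
    unfolding C_def using disj qw pw by (auto dest: in_set_takeD)
  moreover have "length C \<ge> 3" "last C = k"
    unfolding C_def using r \<open>r \<noteq> 0\<close> t pw by auto
  moreover have "hd C = i" unfolding C_def using qw by (cases q) auto
  ultimately show ?thesis
    unfolding has_cycle_def using \<open>{i, k} \<in> E\<close> by (metis insert_commute)
qed

lemma signature_left_neighbour:
  "1 < j \<Longrightarrow> \<exists>m<j. {m, j} \<in> E \<Longrightarrow> signature E j = signature E (LEAST m. {m, j} \<in> E)"
  by (subst signature.simps) simp

lemma signature_no_left_neighbour:
  "1 < j \<Longrightarrow> \<not> (\<exists>m<j. {m, j} \<in> E) \<Longrightarrow> signature E j = signature E (j - 1) + 1"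
  by (subst signature.simps) auto

lemma least_left_neighbour_below_edge:
  assumes "noncrossing E" "{i, k} \<in> E" "i < j" "j < k" "m < j" "{m, j} \<in> E"
  shows "i \<le> (LEAST m. {m, j} \<in> E) \<and> (LEAST m. {m, j} \<in> E) < j \<and> {LEAST m. {m, j} \<in> E, j} \<in> E"
proof -
  let ?l = "LEAST m. {m, j} \<in> E"
  have "{?l, j} \<in> E" "?l \<le> m" using assms(6) by (auto intro: LeastI Least_le)
  moreover have "\<not> ?l < i"
    using assms(1-4) \<open>{?l, j} \<in> E\<close> unfolding noncrossing_def by blast
  ultimately show ?thesis using assms(5) by simp
qed

lemma signature_ge_or_path_below_edge:
  assumes "noncrossing E" "{i, k} \<in> E" "1 \<le> i"
  shows "i < j \<Longrightarrow> j < k \<Longrightarrow> signature E i \<le> signature E j \<and>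
     (signature E i < signature E j \<or> (\<exists>q. is_path E q i j \<and> set q \<subseteq> {i..j}))"
proof (induction j rule: less_induct)
  case (less j)
  show ?case
  proof (cases "\<exists>m<j. {m, j} \<in> E")
    case True
    define l where "l = (LEAST m. {m, j} \<in> E)"
    have l: "i \<le> l" "l < j" "{l, j} \<in> E" and sj: "signature E j = signature E l"
      using True least_left_neighbour_below_edge[OF assms(1,2) less.prems] signature_left_neighbour
        less.prems assms(3) by (auto simp: l_def)
    show ?thesis
    proof (cases "l = i")
      case True
      have "is_path E [i, j] i j" using l True less.prems by (simp add: is_path_def is_walk_def)
      then show ?thesis using sj True less.prems by fastforce
    next
      case False
      then have IH: "signature E i \<le> signature E l \<and>
          (signature E i < signature E l \<or> (\<exists>q. is_path E q i l \<and> set q \<subseteq> {i..l}))"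
        using less.IH[of l] l less.prems by simp
      have "\<exists>q'. is_path E q' i j \<and> set q' \<subseteq> {i..j}"
        if "is_path E q i l" "set q \<subseteq> {i..l}" for q
      proof -
        have "j \<notin> set q" using that(2) l(2) by auto
        then show ?thesis
          using is_path_snoc[OF that(1) l(3)] that(2) l(2) less.prems by fastforce
      qed
      then show ?thesis using IH sj by auto
    qed
  next
    case False
    then have sj: "signature E j = signature E (j - 1) + 1"
      using signature_no_left_neighbour less.prems assms(3) by simp
    have "signature E i \<le> signature E (j - 1)"
      using less.IH[of "j - 1"] less.prems by (cases "j - 1 = i") auto
    then show ?thesis using sj by simp
  qed
qed

theorem lemma3p13:
  fixes n i k :: nat and E :: "nat set set"
  assumes "is_tree n E" and "noncrossing E"
    and "{i, k} \<in> E" and "i < k"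
  shows "(\<forall>j. i < j \<and> j < k \<longrightarrow> signature E j \<ge> signature E i)
       \<and> (\<forall>j p. i < j \<and> j < k \<and> is_path E p j k \<and> i \<notin> set p
              \<longrightarrow> signature E j \<ge> signature E i + 1)"
proof -
  have "graph_on n E" and acyclic: "\<not> has_cycle E"
    using assms(1) by (auto simp: is_tree_def)
  then have "1 \<le> i"
    using assms(3) unfolding graph_on_def by (auto simp: doubleton_eq_iff)
  note below_edge = signature_ge_or_path_below_edge[OF assms(2,3) this]
  have "signature E i < signature E j"
    if between: "i < j" "j < k" and p: "is_path E p j k" "i \<notin> set p" for j p
  proof (rule ccontr)
    assume "\<not> ?thesis"
    then obtain q where "is_path E q i j" "set q \<subseteq> {i..j}" using below_edge between by blast
    moreover have "k \<notin> set q" using calculation between by auto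
    ultimately show False
      using has_cycle_if_paths_and_edge p assms(3) acyclic by blast
  qed
  then show ?thesis using below_edge by (auto simp: Suc_le_eq)
qed

end
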